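(* Let $N\in\mathbb{N}$, $0\le\mu<L<\infty$, and let $M$ be a method which, for coefficients $\{\alpha_{i,j}\}_{i=1,\dots,N;\,j=0,\dots,i-1}$, generates iterates satisfying $w_k-w_\star=(w_0-w_\star)(1-\frac{\mu}{L}\sum_{i=0}^{k-1}\alpha_{k,i})-\sum_{i=0}^{k-1}\frac{\alpha_{k,i}}{L}\nabla\tilde f(w_i)$, $k=1,\dots,N$, where $\tilde f(x)=f(x)-\frac\mu2\|x-w_\star\|^2$. For any $d\in\mathbb{N}$, $f\in\mathcal{F}_{\mu,L}(\mathbb{R}^d)$, $w_\star\in\arg\min_w f(w)$, initial point $w_0\in\mathbb{R}^d$, and $w_N$ the output of $M$ on $f$ from $w_0$, it holds that $\|w_N-w_\star\|^2\le \mathrm{val}(R)\,\|w_0-w_\star\|^2$, where $\mathrm{val}(R)$ is the optimal value of problem (R) described in the context.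
   Context: $\mathcal{F}_{\mu,L}(\mathbb{R}^d)$ denotes the set of proper closed convex functions $f:\mathbb{R}^d\to\mathbb{R}$ such that for all $x,y$: $f(x)\le f(y)+\langle\nabla f(y);x-y\rangle+\frac L2\|x-y\|^2$ and $f(x)\ge f(y)+\langle\nabla f(y);x-y\rangle+\frac\mu2\|x-y\|^2$. Problem (R): maximize $\|w_N-w_\star\|^2$ over $d\in\mathbb{N}$ and triples $(w_i,g_i,f_i)\in\mathbb{R}^d\times\mathbb{R}^d\times\mathbb{R}$, $i\in\{\star,0,\dots,N\}$, subject to: $\|w_0-w_\star\|^2=1$, $g_\star=0$; $w_k=w_\star+(w_0-w_\star)(1-\frac{\mu}{L}\sum_{i=0}^{k-1}\alpha_{k,i})-\sum_{i=0}^{k-1}\frac{\alpha_{k,i}}{L}g_i$ for $k=1,\dots,N$; $f_i\ge f_{i+1}+\langle g_{i+1};w_i-w_{i+1}\rangle+\frac{1}{2(L-\mu)}\|g_i-g_{i+1}\|^2$ for $i=0,\dots,N-2$; $f_\star\ge f_i+\langle g_i;w_\star-w_i\rangle+\frac{1}{2(L-\mu)}\|g_i\|^2$ for $i=0,\dots,N-1$; and $f_{N-1}\ge f_\star+\frac{1}{2(L-\mu)}\|g_{N-1}\|^2$. *)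

theory Defs
  imports "HOL-Analysis.Analysis" "HOL-Library.Extended_Real"
begin

text \<open>The class F_{mu,L}(R^d): f is convex, has gradient grad at every point,
  and satisfies the L-smoothness upper bound and mu-strong convexity lower bound.
  (Properness and closedness are automatic for a real-valued differentiable function.)\<close>
definition in_F :: "real \<Rightarrow> real \<Rightarrow> ('a::euclidean_space \<Rightarrow> real) \<Rightarrow> ('a \<Rightarrow> 'a) \<Rightarrow> bool" where
  "in_F mu L f grad \<longleftrightarrow>
     convex_on UNIV f \<and>
     (\<forall>x. (f has_derivative (\<lambda>h. grad x \<bullet> h)) (at x)) \<and>
     (\<forall>x y. f x \<le> f y + grad y \<bullet> (x - y) + L / 2 * (norm (x - y))\<^sup>2) \<and>
     (\<forall>x y. f x \<ge> f y + grad y \<bullet> (x - y) + mu / 2 * (norm (x - y))\<^sup>2)"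

text \<open>Vectors of R^d in problem (R) are represented as functions nat => real,
  of which only the coordinates 0..d-1 are used.\<close>
definition vip :: "nat \<Rightarrow> (nat \<Rightarrow> real) \<Rightarrow> (nat \<Rightarrow> real) \<Rightarrow> real" where
  "vip d x y = (\<Sum>j<d. x j * y j)"

definition vsq :: "nat \<Rightarrow> (nat \<Rightarrow> real) \<Rightarrow> real" where
  "vsq d x = vip d x x"

text \<open>Feasibility for problem (R).  w i, g i, f i for i = 0..N; ws, fs are w_star, f_star;
  g_star = 0 has been substituted.\<close>
definition feasible_R ::
  "nat \<Rightarrow> real \<Rightarrow> real \<Rightarrow> (nat \<Rightarrow> nat \<Rightarrow> real) \<Rightarrow> nat \<Rightarrow>
   (nat \<Rightarrow> real) \<Rightarrow> real \<Rightarrow> (nat \<Rightarrow> nat \<Rightarrow> real) \<Rightarrow> (nat \<Rightarrow> nat \<Rightarrow> real) \<Rightarrow> (nat \<Rightarrow> real) \<Rightarrow> bool" where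
  "feasible_R N mu L \<alpha> d ws fs w g fv \<longleftrightarrow>
     vsq d (\<lambda>j. w 0 j - ws j) = 1 \<and>
     (\<forall>k\<in>{1..N}. \<forall>j<d. w k j = ws j + (w 0 j - ws j) * (1 - mu / L * (\<Sum>i<k. \<alpha> k i))
                                  - (\<Sum>i<k. \<alpha> k i / L * g i j)) \<and>
     (\<forall>i. i + 2 \<le> N \<longrightarrow>
        fv i \<ge> fv (i+1) + vip d (g (i+1)) (\<lambda>j. w i j - w (i+1) j)
               + 1 / (2 * (L - mu)) * vsq d (\<lambda>j. g i j - g (i+1) j)) \<and>
     (\<forall>i<N. fs \<ge> fv i + vip d (g i) (\<lambda>j. ws j - w i j) + 1 / (2 * (L - mu)) * vsq d (g i)) \<and>
     fv (N - 1) \<ge> fs + 1 / (2 * (L - mu)) * vsq d (g (N - 1))"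

definition val_R :: "nat \<Rightarrow> real \<Rightarrow> real \<Rightarrow> (nat \<Rightarrow> nat \<Rightarrow> real) \<Rightarrow> ereal" where
  "val_R N mu L \<alpha> = Sup {ereal (vsq d (\<lambda>j. w N j - ws j)) | d ws fs w g fv.
                            feasible_R N mu L \<alpha> d ws fs w g fv}"

end

theory Submission
  imports Defs
begin

text \<open>The shifted function \<open>f\<^sub>\<mu> x = f x - \<mu>/2 \<parallel>x - w\<^sub>\<star>\<parallel>\<^sup>2\<close> is convex and \<open>(L - \<mu>)\<close>-smooth,
  so any two points satisfy the interpolation inequality
  \<open>f\<^sub>\<mu> x \<ge> f\<^sub>\<mu> y + \<langle>\<nabla>f\<^sub>\<mu> y, x - y\<rangle> + \<parallel>\<nabla>f\<^sub>\<mu> x - \<nabla>f\<^sub>\<mu> y\<parallel>\<^sup>2 / (2(L - \<mu>))\<close>,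
  and \<open>\<nabla>f\<^sub>\<mu> w\<^sub>\<star> = 0\<close>. Both the inequalities and
  the recursion are invariant under rescaling about \<open>w\<^sub>\<star>\<close>, so one may assume
  \<open>\<parallel>w\<^sub>0 - w\<^sub>\<star>\<parallel> = 1\<close>. The coordinates of the iterates and gradients in an orthonormal basis,
  together with the values of \<open>f\<^sub>\<mu>\<close>, then form a feasible point of (R) with objective value
  \<open>\<parallel>w\<^sub>N - w\<^sub>\<star>\<parallel>\<^sup>2\<close>.\<close>

definition shifted_fun :: "real \<Rightarrow> 'a::real_inner \<Rightarrow> ('a \<Rightarrow> real) \<Rightarrow> 'a \<Rightarrow> real" where
  "shifted_fun mu ws f x = f x - mu / 2 * (norm (x - ws))\<^sup>2"

definition shifted_grad :: "real \<Rightarrow> 'a::real_inner \<Rightarrow> ('a \<Rightarrow> 'a) \<Rightarrow> 'a \<Rightarrow> 'a" where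
  "shifted_grad mu ws grad x = grad x - mu *\<^sub>R (x - ws)"

definition smooth_convex_interpolating :: "real \<Rightarrow> ('a::real_inner \<Rightarrow> real) \<Rightarrow> ('a \<Rightarrow> 'a) \<Rightarrow> bool" where
  "smooth_convex_interpolating Lp F G \<longleftrightarrow>
     (\<forall>x y. F y + G y \<bullet> (x - y) + 1 / (2 * Lp) * (norm (G x - G y))\<^sup>2 \<le> F x)"

definition method_iterates ::
  "nat \<Rightarrow> real \<Rightarrow> real \<Rightarrow> (nat \<Rightarrow> nat \<Rightarrow> real) \<Rightarrow> ('a::real_vector \<Rightarrow> 'a) \<Rightarrow> 'a \<Rightarrow> (nat \<Rightarrow> 'a) \<Rightarrow> bool"
  where
  "method_iterates N mu L \<alpha> G ws w \<longleftrightarrow>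
     (\<forall>k\<in>{1..N}. w k - ws = (1 - mu / L * (\<Sum>i<k. \<alpha> k i)) *\<^sub>R (w 0 - ws)
                              - (\<Sum>i<k. (\<alpha> k i / L) *\<^sub>R G (w i)))"

definition coords :: "'a::real_inner list \<Rightarrow> 'a \<Rightarrow> nat \<Rightarrow> real" where
  "coords bs x = (\<lambda>j. x \<bullet> bs ! j)"

lemma smooth_convex_interpolation:
  fixes h :: "'a::real_inner \<Rightarrow> real" and G :: "'a \<Rightarrow> 'a"
  assumes Lp: "Lp > 0"
    and upper: "\<And>x y. h x \<le> h y + G y \<bullet> (x - y) + Lp / 2 * (norm (x - y))\<^sup>2"
    and lower: "\<And>x y. h y + G y \<bullet> (x - y) \<le> h x"
  shows "smooth_convex_interpolating Lp h G"
  unfolding smooth_convex_interpolating_def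
proof (intro allI)
  fix x y
  define D where "D = G x - G y"
  \<comment> \<open>compare the lower bound at \<open>y\<close> and the upper bound at \<open>x\<close>, both evaluated at a gradient step from \<open>x\<close>\<close>
  define z where "z = x - (1 / Lp) *\<^sub>R D"
  have "h y + G y \<bullet> (z - y) \<le> h z" by (rule lower)
  also have "h z \<le> h x + G x \<bullet> (z - x) + Lp / 2 * (norm (z - x))\<^sup>2" by (rule upper)
  finally have "h y + G y \<bullet> (x - y) + (1 / Lp) * ((G x - G y) \<bullet> D) - Lp / 2 * (norm D / Lp)\<^sup>2
      \<le> h x"
    unfolding z_def using Lp by (simp add: inner_diff_right inner_diff_left algebra_simps)
  moreover have "(G x - G y) \<bullet> D = (norm D)\<^sup>2"
    unfolding D_def by (simp add: power2_norm_eq_inner)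
  then have "(1 / Lp) * ((G x - G y) \<bullet> D) - Lp / 2 * (norm D / Lp)\<^sup>2
      = 1 / (2 * Lp) * (norm D)\<^sup>2"
    using Lp by (simp add: field_simps power2_eq_square)
  ultimately show "h y + G y \<bullet> (x - y) + 1 / (2 * Lp) * (norm (G x - G y))\<^sup>2 \<le> h x"
    unfolding D_def by linarith
qed

lemma smooth_minimizer_grad_eq_0:
  fixes f :: "'a::real_inner \<Rightarrow> real"
  assumes L: "L > 0"
    and upper: "\<And>x y. f x \<le> f y + grad y \<bullet> (x - y) + L / 2 * (norm (x - y))\<^sup>2"
    and min: "\<forall>x. f ws \<le> f x"
  shows "grad ws = 0"
proof -
  define g where "g = grad ws"
  have "f ws \<le> f (ws - (1 / L) *\<^sub>R g)" using min by blast
  also have "\<dots> \<le> f ws - (1 / L) * (norm g)\<^sup>2 + L / 2 * (norm ((1 / L) *\<^sub>R g))\<^sup>2"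
    using upper[of "ws - (1 / L) *\<^sub>R g" ws] unfolding g_def by (simp add: power2_norm_eq_inner)
  also have "\<dots> = f ws - 1 / (2 * L) * (norm g)\<^sup>2"
    using L by (simp add: field_simps power2_eq_square)
  finally have "(norm g)\<^sup>2 \<le> 0" using L by (simp add: field_simps)
  then show ?thesis unfolding g_def by simp
qed

lemma shifted_fun_bregman:
  fixes f :: "'a::real_inner \<Rightarrow> real"
  shows "shifted_fun mu ws f x - shifted_fun mu ws f y - shifted_grad mu ws grad y \<bullet> (x - y)
         = f x - f y - grad y \<bullet> (x - y) - mu / 2 * (norm (x - y))\<^sup>2"
proof -
  have "(norm (a + b))\<^sup>2 = (norm a)\<^sup>2 + 2 * (a \<bullet> b) + (norm b)\<^sup>2" for a b :: 'a
    by (simp add: power2_norm_eq_inner inner_add_left inner_add_right inner_commute)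
  from this[of "x - y" "y - ws"]
  have expand: "(norm (x - ws))\<^sup>2 = (norm (x - y))\<^sup>2 + 2 * ((x - y) \<bullet> (y - ws)) + (norm (y - ws))\<^sup>2"
    by simp
  have "shifted_grad mu ws grad y \<bullet> (x - y) = grad y \<bullet> (x - y) - mu * ((x - y) \<bullet> (y - ws))"
    unfolding shifted_grad_def by (simp add: inner_diff_left inner_diff_right inner_commute)
  then show ?thesis
    unfolding shifted_fun_def expand by (simp add: algebra_simps)
qed

lemma in_F_shifted_interpolating:
  fixes f :: "'a::euclidean_space \<Rightarrow> real"
  assumes "in_F mu L f grad" and "mu < L"
  shows "smooth_convex_interpolating (L - mu) (shifted_fun mu ws f) (shifted_grad mu ws grad)"
proof (rule smooth_convex_interpolation)
  have upper: "f x \<le> f y + grad y \<bullet> (x - y) + L / 2 * (norm (x - y))\<^sup>2"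
    and lower: "f y + grad y \<bullet> (x - y) + mu / 2 * (norm (x - y))\<^sup>2 \<le> f x" for x y
    using assms(1) unfolding in_F_def by auto
  show "L - mu > 0" using assms(2) by simp
  show "shifted_fun mu ws f x \<le> shifted_fun mu ws f y + shifted_grad mu ws grad y \<bullet> (x - y)
          + (L - mu) / 2 * (norm (x - y))\<^sup>2" for x y
  proof -
    have "(L - mu) / 2 * (norm (x - y))\<^sup>2 = L / 2 * (norm (x - y))\<^sup>2 - mu / 2 * (norm (x - y))\<^sup>2"
      by (simp add: left_diff_distrib)
    then show ?thesis using upper[where x = x and y = y] shifted_fun_bregman[of mu ws f x y grad] by linarith
  qed
  show "shifted_fun mu ws f y + shifted_grad mu ws grad y \<bullet> (x - y) \<le> shifted_fun mu ws f x" for x y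
    using lower[where x = x and y = y] shifted_fun_bregman[of mu ws f x y grad] by simp
qed

lemma vip_coords:
  fixes bs :: "'a::euclidean_space list"
  assumes "distinct bs" and "set bs = Basis"
  shows "vip (length bs) (coords bs x) (coords bs y) = x \<bullet> y"
proof -
  have "vip (length bs) (coords bs x) (coords bs y) = (\<Sum>j<length bs. (x \<bullet> bs ! j) * (y \<bullet> bs ! j))"
    unfolding vip_def coords_def by simp
  also have "\<dots> = (\<Sum>b\<in>Basis. (x \<bullet> b) * (y \<bullet> b))"
    using sum.reindex_bij_betw[OF bij_betw_nth[OF assms(1) refl assms(2)[symmetric]]] by simp
  also have "\<dots> = x \<bullet> y" by (rule euclidean_inner[symmetric])
  finally show ?thesis .
qed

lemma coords_diff: "(\<lambda>j. coords bs x j - coords bs y j) = coords bs (x - y)"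
  unfolding coords_def by (simp add: inner_diff_left)

lemma feasible_R_le_val_R:
  "feasible_R N mu L \<alpha> d ws fs w g fv \<Longrightarrow> ereal (vsq d (\<lambda>j. w N j - ws j)) \<le> val_R N mu L \<alpha>"
  unfolding val_R_def by (intro Sup_upper) blast

lemma method_iterates_stationary:
  assumes "method_iterates N mu L \<alpha> G ws w" and "G ws = 0" and "w 0 = ws" and "k \<le> N"
  shows "w k = ws"
  using \<open>k \<le> N\<close>
proof (induction k rule: less_induct)
  case (less k)
  show ?case
  proof (cases "k = 0")
    case True
    then show ?thesis using \<open>w 0 = ws\<close> by simp
  next
    case False
    then have "w k - ws = (1 - mu / L * (\<Sum>i<k. \<alpha> k i)) *\<^sub>R (w 0 - ws)
                         - (\<Sum>i<k. (\<alpha> k i / L) *\<^sub>R G (w i))"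
      using assms(1) less.prems unfolding method_iterates_def by auto
    also have "\<dots> = 0" using less.IH less.prems assms(2,3) by simp
    finally show ?thesis by simp
  qed
qed

lemma method_iterates_scaled:
  assumes "method_iterates N mu L \<alpha> G ws w" and "r \<noteq> 0"
  shows "method_iterates N mu L \<alpha> (\<lambda>x. (1 / r) *\<^sub>R G (ws + r *\<^sub>R (x - ws))) ws
           (\<lambda>i. ws + (1 / r) *\<^sub>R (w i - ws))"
  using assms unfolding method_iterates_def
  by (simp add: scaleR_diff_right scaleR_sum_right mult.commute)

lemma smooth_convex_interpolating_scaled:
  fixes G :: "'a::real_inner \<Rightarrow> 'a"
  assumes "smooth_convex_interpolating Lp F G" and "r > 0"
  shows "smooth_convex_interpolating Lp
           (\<lambda>x. F (ws + r *\<^sub>R (x - ws)) / r\<^sup>2) (\<lambda>x. (1 / r) *\<^sub>R G (ws + r *\<^sub>R (x - ws)))"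
  unfolding smooth_convex_interpolating_def
proof (intro allI)
  fix x y
  define X Y where "X = ws + r *\<^sub>R (x - ws)" and "Y = ws + r *\<^sub>R (y - ws)"
  have XY: "X - Y = r *\<^sub>R (x - y)" unfolding X_def Y_def by (simp add: scaleR_diff_right)
  have "(F Y + G Y \<bullet> (X - Y) + 1 / (2 * Lp) * (norm (G X - G Y))\<^sup>2) / r\<^sup>2 \<le> F X / r\<^sup>2"
    using assms(1) unfolding smooth_convex_interpolating_def by (simp add: divide_right_mono)
  moreover have "norm ((1 / r) *\<^sub>R G X - (1 / r) *\<^sub>R G Y) = norm (G X - G Y) / r"
    using assms(2) by (simp flip: scaleR_diff_right)
  ultimately show "F Y / r\<^sup>2 + (1 / r) *\<^sub>R G Y \<bullet> (x - y)
      + 1 / (2 * Lp) * (norm ((1 / r) *\<^sub>R G X - (1 / r) *\<^sub>R G Y))\<^sup>2 \<le> F X / r\<^sup>2"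
    using assms(2) unfolding XY by (simp add: add_divide_distrib power_divide power2_eq_square)
qed

lemma norm_sq_le_val_R_normalized:
  fixes F :: "'a::euclidean_space \<Rightarrow> real" and G :: "'a \<Rightarrow> 'a"
  assumes interp: "smooth_convex_interpolating (L - mu) F G"
    and G_ws: "G ws = 0"
    and iter: "method_iterates N mu L \<alpha> G ws w"
    and unit: "norm (w 0 - ws) = 1"
  shows "ereal ((norm (w N - ws))\<^sup>2) \<le> val_R N mu L \<alpha>"
proof -
  obtain bs where bs: "distinct bs" "set bs = (Basis :: 'a set)"
    using finite_distinct_list[OF finite_Basis] by metis
  let ?d = "length bs" and ?c = "coords bs"
  have vip: "vip ?d (?c x) (?c y) = x \<bullet> y" for x y
    using vip_coords[OF bs] .
  have vsq: "vsq ?d (?c x) = (norm x)\<^sup>2" for x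
    unfolding vsq_def vip by (simp add: power2_norm_eq_inner)
  have ineq: "F y + G y \<bullet> (x - y) + 1 / (2 * (L - mu)) * (norm (G x - G y))\<^sup>2 \<le> F x" for x y
    using interp unfolding smooth_convex_interpolating_def by blast
  have "feasible_R N mu L \<alpha> ?d (?c 0) (F ws) (\<lambda>i. ?c (w i - ws)) (\<lambda>i. ?c (G (w i))) (\<lambda>i. F (w i))"
    unfolding feasible_R_def coords_diff
  proof (intro conjI ballI allI impI)
    show "vsq ?d (?c (w 0 - ws - 0)) = 1" using unit by (simp add: vsq)
  next
    fix k j assume "k \<in> {1..N}"
    then have "w k - ws = (1 - mu / L * (\<Sum>i<k. \<alpha> k i)) *\<^sub>R (w 0 - ws)
                         - (\<Sum>i<k. (\<alpha> k i / L) *\<^sub>R G (w i))"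
      using iter unfolding method_iterates_def by blast
    then show "?c (w k - ws) j = ?c 0 j + (?c (w 0 - ws) j - ?c 0 j) * (1 - mu / L * (\<Sum>i<k. \<alpha> k i))
                                - (\<Sum>i<k. \<alpha> k i / L * ?c (G (w i)) j)"
      unfolding coords_def by (simp add: inner_diff_left inner_sum_left mult.commute)
  next
    fix i
    show "F (w (i + 1)) + vip ?d (?c (G (w (i + 1)))) (?c (w i - ws - (w (i + 1) - ws)))
          + 1 / (2 * (L - mu)) * vsq ?d (?c (G (w i) - G (w (i + 1)))) \<le> F (w i)"
      using ineq[where x = "w i" and y = "w (i + 1)"] by (simp add: vip vsq)
  next
    fix i
    show "F (w i) + vip ?d (?c (G (w i))) (?c (0 - (w i - ws)))
          + 1 / (2 * (L - mu)) * vsq ?d (?c (G (w i))) \<le> F ws"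
      using ineq[where x = ws and y = "w i"] G_ws by (simp add: vip vsq)
  next
    show "F ws + 1 / (2 * (L - mu)) * vsq ?d (?c (G (w (N - 1)))) \<le> F (w (N - 1))"
      using ineq[where x = "w (N - 1)" and y = ws] G_ws by (simp add: vsq)
  qed
  from feasible_R_le_val_R[OF this] have "ereal (vsq ?d (?c (w N - ws - 0))) \<le> val_R N mu L \<alpha>"
    by (simp only: coords_diff)
  then show ?thesis by (simp add: vsq)
qed

lemma norm_sq_le_val_R:
  fixes F :: "'a::euclidean_space \<Rightarrow> real" and G :: "'a \<Rightarrow> 'a"
  assumes interp: "smooth_convex_interpolating (L - mu) F G"
    and G_ws: "G ws = 0"
    and iter: "method_iterates N mu L \<alpha> G ws w"
  shows "ereal ((norm (w N - ws))\<^sup>2) \<le> val_R N mu L \<alpha> * ereal ((norm (w 0 - ws))\<^sup>2)"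
proof (cases "w 0 = ws")
  case True
  then show ?thesis
    using method_iterates_stationary[OF iter G_ws True order_refl] by (simp flip: zero_ereal_def)
next
  case False
  define r where "r = norm (w 0 - ws)"
  have r: "r > 0" using False unfolding r_def by simp
  define F' where "F' x = F (ws + r *\<^sub>R (x - ws)) / r\<^sup>2" for x
  define G' where "G' x = (1 / r) *\<^sub>R G (ws + r *\<^sub>R (x - ws))" for x
  define w' where "w' i = ws + (1 / r) *\<^sub>R (w i - ws)" for i
  have "smooth_convex_interpolating (L - mu) F' G'"
    unfolding F'_def[abs_def] G'_def[abs_def] by (rule smooth_convex_interpolating_scaled[OF interp r])
  moreover have "G' ws = 0" unfolding G'_def using G_ws by simp
  moreover have "method_iterates N mu L \<alpha> G' ws w'"
    unfolding G'_def[abs_def] w'_def[abs_def] using r by (intro method_iterates_scaled[OF iter]) simp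
  moreover have "norm (w' 0 - ws) = 1" using r unfolding w'_def r_def by simp
  ultimately have "ereal ((norm (w' N - ws))\<^sup>2) \<le> val_R N mu L \<alpha>"
    by (rule norm_sq_le_val_R_normalized)
  moreover have "(norm (w' N - ws))\<^sup>2 = (norm (w N - ws))\<^sup>2 / r\<^sup>2"
    unfolding w'_def using r by (simp add: power_divide)
  ultimately have "ereal ((norm (w N - ws))\<^sup>2 / r\<^sup>2) * ereal (r\<^sup>2) \<le> val_R N mu L \<alpha> * ereal (r\<^sup>2)"
    by (intro ereal_mult_right_mono) auto
  then show ?thesis using r unfolding r_def by simp
qed

theorem lemma4:
  fixes N :: nat and mu L :: real and \<alpha> :: "nat \<Rightarrow> nat \<Rightarrow> real"
    and f :: "'a::euclidean_space \<Rightarrow> real" and grad :: "'a \<Rightarrow> 'a"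
    and ws :: 'a and w :: "nat \<Rightarrow> 'a"
  assumes "0 \<le> mu" and "mu < L"
    and "in_F mu L f grad"
    and "\<forall>x. f ws \<le> f x"
    and "\<forall>k\<in>{1..N}. w k - ws =
           (1 - mu / L * (\<Sum>i<k. \<alpha> k i)) *\<^sub>R (w 0 - ws)
           - (\<Sum>i<k. (\<alpha> k i / L) *\<^sub>R (grad (w i) - mu *\<^sub>R (w i - ws)))"
  shows "ereal ((norm (w N - ws))\<^sup>2) \<le> val_R N mu L \<alpha> * ereal ((norm (w 0 - ws))\<^sup>2)"
proof (rule norm_sq_le_val_R)
  show "smooth_convex_interpolating (L - mu) (shifted_fun mu ws f) (shifted_grad mu ws grad)"
    using in_F_shifted_interpolating[OF assms(3,2)] .
  have "grad ws = 0"
    using smooth_minimizer_grad_eq_0[of L f grad ws] assms(1-4) unfolding in_F_def by auto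
  then show "shifted_grad mu ws grad ws = 0" unfolding shifted_grad_def by simp
  show "method_iterates N mu L \<alpha> (shifted_grad mu ws grad) ws w"
    using assms(5) unfolding method_iterates_def shifted_grad_def .
qed

end
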